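(* Let $M,N\in\mathbb{N}$. The zeta function of the Motzkin shift $\mathbf M(M,N)$ is $$\zeta(\mathbf{M}(M,N),z)=\frac{2\{1-Nz+\sqrt{(1-Nz)^2-4Mz^2}\}}{\{1-(2M+N)z+\sqrt{(1-Nz)^2-4Mz^2}\}^2}.$$
   Context: Alphabet $\Sigma=\{\lambda_1,\dots,\lambda_M,\rho_1,\dots,\rho_M,1_1,\dots,1_N\}$. $\mathcal{M}(M,N)$ is the monoid with zero generated by $\Sigma$ and an identity $\mathbf{1}$, subject only to the relations $\lambda_i\rho_i=\mathbf{1}$, $\lambda_i\rho_j=0$ ($i\neq j$), each $1_i$ acts as the identity ($1_i\alpha=\alpha 1_i=\alpha$, $1_i1_j=\mathbf 1$), and $0$ is absorbing; no other relations. $\mathit{red}:\Sigma^*\to\mathcal{M}(M,N)$ sends a word to the product of its letters (empty word to $\mathbf 1$). The Motzkin shift is $\mathbf{M}(M,N)=\{x\in\Sigma^{\mathbb Z}:\mathit{red}(x_i\cdots x_j)\neq 0\ \forall i\le j\}$ with shift $\sigma$. For a subshift $X$, $p_n(X)$ is the number of points $x\in X$ with $\sigma^nx=x$, and the zeta function is $\zeta(X,z)=\exp\sum_{n\ge1}\frac{p_n(X)}{n}z^n$ (as a formal power series). *)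

theory Defs
  imports Complex_Main "HOL-Computational_Algebra.Formal_Power_Series"
begin

datatype sym = Lam nat | Rho nat | One nat

definition alphabet :: "nat \<Rightarrow> nat \<Rightarrow> sym set" where
  "alphabet M N = {Lam i | i. 1 \<le> i \<and> i \<le> M} \<union> {Rho i | i. 1 \<le> i \<and> i \<le> M}
                  \<union> {One i | i. 1 \<le> i \<and> i \<le> N}"

text \<open>Presentation of the monoid with zero: elements of the free monoid with an adjoined
  zero are represented as sym list option (None = 0, Some w = the word w, Some [] = identity).
  One-step applications (inside an arbitrary context u _ v) of the defining relations;
  the monoid is the quotient by the equivalence closure of these steps (a congruence).\<close>
inductive mstep :: "sym list option \<Rightarrow> sym list option \<Rightarrow> bool" where
  cancel: "mstep (Some (u @ [Lam i, Rho i] @ v)) (Some (u @ v))"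
| kill: "i \<noteq> j \<Longrightarrow> mstep (Some (u @ [Lam i, Rho j] @ v)) None"
| unit: "mstep (Some (u @ [One i] @ v)) (Some (u @ v))"

definition red_is_zero :: "sym list \<Rightarrow> bool" where
  "red_is_zero w \<longleftrightarrow> equivclp mstep (Some w) None"

definition motzkin_shift :: "nat \<Rightarrow> nat \<Rightarrow> (int \<Rightarrow> sym) set" where
  "motzkin_shift M N = {x. (\<forall>i. x i \<in> alphabet M N) \<and>
       (\<forall>i j. i \<le> j \<longrightarrow> \<not> red_is_zero (map x [i..j]))}"

definition shift :: "(int \<Rightarrow> sym) \<Rightarrow> (int \<Rightarrow> sym)" where
  "shift x = (\<lambda>i. x (i + 1))"

definition periodic_count :: "(int \<Rightarrow> sym) set \<Rightarrow> nat \<Rightarrow> nat" where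
  "periodic_count X n = card {x \<in> X. (shift ^^ n) x = x}"

definition zeta_fps :: "(int \<Rightarrow> sym) set \<Rightarrow> real fps" where
  "zeta_fps X = fps_exp 1 oo
     Abs_fps (\<lambda>n. if n = 0 then 0 else real (periodic_count X n) / real n)"

definition fps_sqrt1 :: "real fps \<Rightarrow> real fps" where
  "fps_sqrt1 a = fps_radical (\<lambda>_ x. sqrt x) 2 a"

end

(*
  A word is nonzero in the Motzkin monoid iff its stack reduction from the right never meets
  lambda_i rho_j with i \<noteq> j; the nonzero elements are the reduced words rho..rho lambda..lambda.
  A point of period n is a word w of length n all of whose powers are nonzero. Give lambda height 1,
  rho height -1 and 1_i height 0. If w has height 0, the rotations of w that are balanced (Motzkin
  paths with matching labels) are the cuts of one of them at its returns to height 0, so these w are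
  counted by the sum, over balanced words u, of the length of the first factor of u. Words of positive
  height are counted in the same way by rising words (all nonempty prefixes of positive height), and
  mirroring handles negative height. Decomposing by first factors gives B = 1 + N z B + M z^2 B^2 and
  T = 1 + M z B T for the generating functions of balanced and rising words, and identifies the
  logarithmic derivative of B T^2 with sum p_n z^(n-1). Hence zeta = B T^2, which is the closed form
  because sqrt((1 - N z)^2 - 4 M z^2) = 1 - N z - 2 M z^2 B.
*)

theory Submission
  imports Defs
begin

unbundle fps_syntax

section \<open>Reduced words in the Motzkin monoid\<close>

lemma equivclp_map:
  assumes "\<And>a b. r a b \<Longrightarrow> r (f a) (f b)" and "equivclp r x y"
  shows "equivclp r (f x) (f y)"
  using assms(2)
proof (induction rule: equivclp_induct)
  case base
  then show ?case by simp
next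
  case (step y z)
  then show ?case using assms(1) by (blast intro: equivclp_into_equivclp)
qed

text \<open>\<^term>\<open>Some (r, l)\<close> stands for the reduced word
  \<open>Rho r\<^sub>1 \<dots> Rho r\<^sub>k Lam l\<^sub>1 \<dots> Lam l\<^sub>m\<close> and \<^term>\<open>None\<close> for zero.\<close>

fun cons_nf :: "sym \<Rightarrow> (nat list \<times> nat list) option \<Rightarrow> (nat list \<times> nat list) option" where
  "cons_nf c None = None"
| "cons_nf (One i) (Some s) = Some s"
| "cons_nf (Rho i) (Some (r, l)) = Some (i # r, l)"
| "cons_nf (Lam i) (Some (r, l)) =
     (case r of [] \<Rightarrow> Some ([], i # l) | j # r' \<Rightarrow> if i = j then Some (r', l) else None)"

definition nf_act :: "sym list \<Rightarrow> (nat list \<times> nat list) option \<Rightarrow> (nat list \<times> nat list) option" where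
  "nf_act u s = foldr cons_nf u s"

definition nf :: "sym list \<Rightarrow> (nat list \<times> nat list) option" where
  "nf u = nf_act u (Some ([], []))"

definition nonzero :: "sym list \<Rightarrow> bool" where
  "nonzero u \<longleftrightarrow> nf u \<noteq> None"

lemma nf_act_Nil [simp]: "nf_act [] s = s"
  by (simp add: nf_act_def)

lemma nf_act_Cons [simp]: "nf_act (c # u) s = cons_nf c (nf_act u s)"
  by (simp add: nf_act_def)

lemma nf_act_append: "nf_act (u @ v) s = nf_act u (nf_act v s)"
  by (simp add: nf_act_def)

lemma nf_act_None [simp]: "nf_act u None = None"
  by (induction u) auto

lemma nf_Nil [simp]: "nf [] = Some ([], [])"
  by (simp add: nf_def)

lemma nf_Cons: "nf (c # u) = cons_nf c (nf u)"
  by (simp add: nf_def)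

lemma nf_append: "nf (u @ v) = nf_act u (nf v)"
  by (simp add: nf_def nf_act_append)

lemma nonzero_Nil [simp]: "nonzero []"
  by (simp add: nonzero_def)

lemma mstep_context:
  "mstep a b \<Longrightarrow> mstep (map_option (\<lambda>w. x @ w @ y) a) (map_option (\<lambda>w. x @ w @ y) b)"
proof (induction rule: mstep.induct)
  case (cancel u i v)
  then show ?case using mstep.cancel[of "x @ u" i "v @ y"] by simp
next
  case (kill i j u v)
  then show ?case using mstep.kill[of i j "x @ u" "v @ y"] by simp
next
  case (unit u i v)
  then show ?case using mstep.unit[of "x @ u" i "v @ y"] by simp
qed

lemma equivclp_mstep_context:
  "equivclp mstep a b \<Longrightarrow>
     equivclp mstep (map_option (\<lambda>w. x @ w @ y) a) (map_option (\<lambda>w. x @ w @ y) b)"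
  using equivclp_map[of mstep "map_option (\<lambda>w. x @ w @ y)"] mstep_context by blast

lemma red_is_zero_context: "red_is_zero w \<Longrightarrow> red_is_zero (x @ w @ y)"
  unfolding red_is_zero_def by (drule equivclp_mstep_context[of _ _ x y]) simp

lemma mstep_preserves_nf: "mstep a b \<Longrightarrow> Option.bind a nf = Option.bind b nf"
proof (induction rule: mstep.induct)
  case (cancel u i v)
  have "nf_act [Lam i, Rho i] s = s" for s by (cases s) auto
  then show ?case by (simp add: nf_append nf_act_append nf_Cons)
next
  case (kill i j u v)
  have "nf_act [Lam i, Rho j] s = None" for s using kill by (cases s) auto
  then show ?case by (simp add: nf_append nf_act_append nf_Cons)
next
  case (unit u i v)
  have "nf_act [One i] s = s" for s by (cases s) auto
  then show ?case by (simp add: nf_append nf_act_append nf_Cons)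
qed

lemma equivclp_mstep_nf: "equivclp mstep a b \<Longrightarrow> Option.bind a nf = Option.bind b nf"
  by (induction rule: equivclp_induct) (auto dest: mstep_preserves_nf)

lemma equivclp_mstep_Cons:
  "equivclp mstep (Some w) (Some w') \<Longrightarrow> equivclp mstep (Some (c # w)) (Some (c # w'))"
  using equivclp_mstep_context[of "Some w" "Some w'" "[c]" "[]"] by simp

lemma equivclp_nf:
  "nf w = Some (r, l) \<Longrightarrow> equivclp mstep (Some w) (Some (map Rho r @ map Lam l))"
proof (induction w arbitrary: r l)
  case Nil
  then show ?case by simp
next
  case (Cons c w)
  then obtain r' l' where w: "nf w = Some (r', l')"
    by (cases "nf w") (auto simp: nf_Cons)
  have IH: "equivclp mstep (Some (c # w)) (Some (c # map Rho r' @ map Lam l'))"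
    using equivclp_mstep_Cons[OF Cons.IH[OF w]] by simp
  show ?case
  proof (cases c)
    case (Lam i)
    show ?thesis
    proof (cases r')
      case Nil
      then show ?thesis using Cons.prems w IH Lam by (auto simp: nf_Cons)
    next
      case (Cons j r'')
      with Cons.prems w Lam have "i = j" "r = r''" "l = l'"
        by (auto simp: nf_Cons split: if_splits)
      moreover have "mstep (Some ([] @ [Lam i, Rho i] @ map Rho r'' @ map Lam l'))
                           (Some ([] @ map Rho r'' @ map Lam l'))"
        by (rule mstep.cancel)
      ultimately show ?thesis using IH Lam Cons by (auto intro: equivclp_into_equivclp)
    qed
  next
    case (Rho i)
    then show ?thesis using Cons.prems w IH by (auto simp: nf_Cons)
  next
    case (One i)
    have "mstep (Some ([] @ [One i] @ map Rho r' @ map Lam l')) (Some ([] @ map Rho r' @ map Lam l'))"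
      by (rule mstep.unit)
    then show ?thesis using Cons.prems w IH One by (auto simp: nf_Cons intro: equivclp_into_equivclp)
  qed
qed

lemma red_is_zero_if_nf_None: "nf w = None \<Longrightarrow> red_is_zero w"
proof (induction w)
  case Nil
  then show ?case by simp
next
  case (Cons c w)
  show ?case
  proof (cases "nf w")
    case None
    then show ?thesis using red_is_zero_context[OF Cons.IH, of "[c]" "[]"] by simp
  next
    case (Some s)
    then obtain r l where w: "nf w = Some (r, l)" by (cases s) auto
    then obtain i j r' where c: "c = Lam i" "r = j # r'" "i \<noteq> j"
      using Cons.prems by (cases c; cases r) (auto simp: nf_Cons split: if_splits)
    have "mstep (Some ([] @ [Lam i, Rho j] @ map Rho r' @ map Lam l)) None"
      by (rule mstep.kill) (use c in auto)
    then show ?thesis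
      using equivclp_mstep_Cons[OF equivclp_nf[OF w], of c] c unfolding red_is_zero_def
      by (auto intro: equivclp_into_equivclp)
  qed
qed

lemma red_is_zero_iff_not_nonzero: "red_is_zero w \<longleftrightarrow> \<not> nonzero w"
proof
  assume "red_is_zero w"
  then show "\<not> nonzero w"
    using equivclp_mstep_nf unfolding red_is_zero_def nonzero_def by fastforce
next
  assume "\<not> nonzero w"
  then show "red_is_zero w" by (metis nonzero_def red_is_zero_if_nf_None)
qed

lemma nonzero_factor: "nonzero (x @ w @ y) \<Longrightarrow> nonzero w"
  using red_is_zero_context red_is_zero_iff_not_nonzero by blast

lemma nonzero_appendD: "nonzero (u @ v) \<Longrightarrow> nonzero u \<and> nonzero v"
  using nonzero_factor[of "[]" u v] nonzero_factor[of u v "[]"] by simp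

fun letter_height :: "sym \<Rightarrow> int" where
  "letter_height (Lam i) = 1"
| "letter_height (Rho i) = -1"
| "letter_height (One i) = 0"

definition height :: "sym list \<Rightarrow> int" where
  "height u = sum_list (map letter_height u)"

lemma height_Nil [simp]: "height [] = 0"
  by (simp add: height_def)

lemma height_Cons [simp]: "height (c # u) = letter_height c + height u"
  by (simp add: height_def)

lemma height_append [simp]: "height (u @ v) = height u + height v"
  by (simp add: height_def)

lemma height_take_drop: "height (take k (drop c w)) = height (take (c + k) w) - height (take c w)"
  by (simp add: take_add)

lemma height_take_Suc:
  "k < length u \<Longrightarrow> height (take (Suc k) u) = height (take k u) + letter_height (u ! k)"
  by (simp add: take_Suc_conv_app_nth)

lemma nf_height: "nf u = Some (r, l) \<Longrightarrow> height u = int (length l) - int (length r)"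
proof (induction u arbitrary: r l)
  case Nil
  then show ?case by simp
next
  case (Cons c u)
  then obtain r1 l1 where u: "nf u = Some (r1, l1)" by (cases "nf u") (auto simp: nf_Cons)
  show ?case using Cons.prems u Cons.IH[OF u]
    by (cases c; cases r1) (auto simp: nf_Cons split: if_splits)
qed

lemma nf_prefix_height_le: "nf u = Some (r, l) \<Longrightarrow> \<exists>k. height (take k u) \<le> - int (length r)"
proof (induction u arbitrary: r l)
  case Nil
  then show ?case by (intro exI[of _ 0]) simp
next
  case (Cons c u)
  then obtain r1 l1 where u: "nf u = Some (r1, l1)" by (cases "nf u") (auto simp: nf_Cons)
  from Cons.IH[OF u] obtain k where k: "height (take k u) \<le> - int (length r1)" by blast
  show ?case
  proof (cases "(\<exists>i. c = Lam i) \<and> r1 = []")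
    case True
    then show ?thesis using Cons.prems u by (intro exI[of _ 0]) (auto simp: nf_Cons)
  next
    case False
    then show ?thesis using Cons.prems u k
      by (intro exI[of _ "Suc k"]) (cases c; auto simp: nf_Cons split: list.splits if_splits)
  qed
qed

lemma nf_no_rho_if_prefix_height_nonneg:
  assumes "nonzero u" and "\<forall>k. 0 \<le> height (take k u)"
  shows "\<exists>l. nf u = Some ([], l)"
proof -
  obtain r l where u: "nf u = Some (r, l)" using assms(1) unfolding nonzero_def by auto
  from nf_prefix_height_le[OF u] obtain k where "height (take k u) \<le> - int (length r)" by blast
  with assms(2)[rule_format, of k] have "length r = 0" by linarith
  then have "r = []" by simp
  with u show ?thesis by blast
qed

lemma nf_act_if_nf_rho_only: "nf u = Some (r, []) \<Longrightarrow> nf_act u (Some (r0, l0)) = Some (r @ r0, l0)"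
proof (induction u arbitrary: r)
  case Nil
  then show ?case by simp
next
  case (Cons c u)
  then obtain r1 l1 where u: "nf u = Some (r1, l1)" by (cases "nf u") (auto simp: nf_Cons)
  then show ?case using Cons
    by (cases c; cases r1) (auto simp: nf_Cons split: if_splits)
qed

lemma nf_act_no_rho: "nf_act u (Some ([], l0)) = map_option (\<lambda>(r, l). (r, l @ l0)) (nf u)"
proof (induction u)
  case Nil
  then show ?case by simp
next
  case (Cons c u)
  show ?case
  proof (cases "nf u")
    case None
    then show ?thesis using Cons.IH by (simp add: nf_Cons)
  next
    case (Some p)
    then obtain r l where "nf u = Some (r, l)" by (cases p) auto
    then show ?thesis using Cons.IH by (cases c; cases r) (auto simp: nf_Cons)
  qed
qed

lemma nonzero_append_if_nf_no_rho: "nonzero u \<Longrightarrow> nf v = Some ([], l) \<Longrightarrow> nonzero (u @ v)"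
  unfolding nonzero_def nf_append by (simp add: nf_act_no_rho)

fun swap_letter :: "sym \<Rightarrow> sym" where
  "swap_letter (Lam i) = Rho i"
| "swap_letter (Rho i) = Lam i"
| "swap_letter (One i) = One i"

definition mirror :: "sym list \<Rightarrow> sym list" where
  "mirror u = rev (map swap_letter u)"

lemma swap_letter_swap_letter [simp]: "swap_letter (swap_letter c) = c"
  by (cases c) auto

lemma mirror_mirror [simp]: "mirror (mirror u) = u"
  by (simp add: mirror_def rev_map comp_def)

lemma mirror_append [simp]: "mirror (u @ v) = mirror v @ mirror u"
  by (simp add: mirror_def)

lemma length_mirror [simp]: "length (mirror u) = length u"
  by (simp add: mirror_def)

lemma set_mirror: "set (mirror u) = swap_letter ` set u"
  by (simp add: mirror_def)

lemma height_mirror [simp]: "height (mirror u) = - height u"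
proof -
  have "letter_height (swap_letter c) = - letter_height c" for c
    by (cases c) auto
  then show ?thesis
    by (induction u) (auto simp: mirror_def)
qed

lemma mstep_mirror: "mstep a b \<Longrightarrow> mstep (map_option mirror a) (map_option mirror b)"
proof (induction rule: mstep.induct)
  case (cancel u i v)
  then show ?case using mstep.cancel[of "mirror v" i "mirror u"] by (simp add: mirror_def)
next
  case (kill i j u v)
  then show ?case using mstep.kill[of j i "mirror v" "mirror u"] by (simp add: mirror_def)
next
  case (unit u i v)
  then show ?case using mstep.unit[of "mirror v" i "mirror u"] by (simp add: mirror_def)
qed

lemma red_is_zero_mirror: "red_is_zero w \<Longrightarrow> red_is_zero (mirror w)"
  unfolding red_is_zero_def
  using equivclp_map[of mstep "map_option mirror", OF mstep_mirror] by fastforce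

lemma nonzero_mirror_iff [simp]: "nonzero (mirror w) \<longleftrightarrow> nonzero w"
  using red_is_zero_mirror[of w] red_is_zero_mirror[of "mirror w"] red_is_zero_iff_not_nonzero
  by auto

section \<open>Balanced and rising words\<close>

definition balanced :: "sym list \<Rightarrow> bool" where
  "balanced u \<longleftrightarrow> nonzero u \<and> height u = 0 \<and> (\<forall>k. 0 \<le> height (take k u))"

definition rising :: "sym list \<Rightarrow> bool" where
  "rising u \<longleftrightarrow> nonzero u \<and> (\<forall>k. 0 < k \<and> k \<le> length u \<longrightarrow> 1 \<le> height (take k u))"

lemma balanced_Nil [simp]: "balanced []"
  by (simp add: balanced_def)

lemma rising_Nil [simp]: "rising []"
  by (auto simp: rising_def)

lemma rising_prefix_height_nonneg:
  assumes "rising u"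
  shows "0 \<le> height (take k u)"
proof (cases "k = 0 \<or> u = []")
  case True
  then show ?thesis by auto
next
  case False
  then have "1 \<le> height (take (min k (length u)) u)"
    using assms unfolding rising_def by (simp add: min_def)
  then show ?thesis by (simp add: min_def split: if_splits)
qed

lemma rising_height_pos:
  assumes "rising u" and "u \<noteq> []"
  shows "0 < height u"
proof -
  have "1 \<le> height (take (length u) u)" using assms unfolding rising_def by auto
  then show ?thesis by simp
qed

lemma nf_balanced: "balanced u \<Longrightarrow> nf u = Some ([], [])"
  using nf_no_rho_if_prefix_height_nonneg[of u] nf_height[of u] unfolding balanced_def by fastforce

lemma nf_rising: "rising u \<Longrightarrow> \<exists>l. nf u = Some ([], l)"
  using nf_no_rho_if_prefix_height_nonneg[of u] rising_prefix_height_nonneg[of u]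
  unfolding rising_def by blast

lemma balanced_append: "balanced u \<Longrightarrow> balanced v \<Longrightarrow> balanced (u @ v)"
  using nonzero_append_if_nf_no_rho[of u v] nf_balanced[of v] by (simp add: balanced_def)

lemma rising_append:
  assumes "rising u" and "rising v"
  shows "rising (u @ v)"
proof -
  obtain l where "nf v = Some ([], l)" using nf_rising[OF assms(2)] by blast
  then have "nonzero (u @ v)"
    using assms(1) by (intro nonzero_append_if_nf_no_rho) (auto simp: rising_def)
  moreover have "1 \<le> height (take k (u @ v))" if "0 < k" "k \<le> length (u @ v)" for k
  proof (cases "k \<le> length u")
    case True
    then show ?thesis using assms that by (simp add: rising_def)
  next
    case False
    then have "1 \<le> height (take (k - length u) v)" using assms(2) that unfolding rising_def by auto
    then show ?thesis using False rising_prefix_height_nonneg[OF assms(1), of "length u"] by simp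
  qed
  ultimately show ?thesis by (simp add: rising_def)
qed

lemma balanced_concat_replicate: "balanced u \<Longrightarrow> balanced (concat (replicate k u))"
  by (induction k) (auto intro: balanced_append)

lemma rising_concat_replicate: "rising u \<Longrightarrow> rising (concat (replicate k u))"
  by (induction k) (auto intro: rising_append)

lemma height_take_Cons:
  "height (take k (c # v)) = (if k = 0 then 0 else letter_height c + height (take (k - 1) v))"
  by (cases k) auto

lemma balanced_One_Cons: "balanced v \<Longrightarrow> balanced (One i # v)"
  unfolding balanced_def by (auto simp: nonzero_def nf_Cons height_take_Cons)

lemma balanced_Lam_Rho:
  assumes a: "balanced a" and b: "balanced b"
  shows "balanced (Lam i # a @ Rho i # b)"
proof -
  have "nf (Lam i # a @ Rho i # b) = Some ([], [])"
    by (simp add: nf_Cons nf_append nf_balanced[OF b] nf_act_if_nf_rho_only[OF nf_balanced[OF a]])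
  then have "nonzero (Lam i # a @ Rho i # b)" by (simp add: nonzero_def)
  moreover have "0 \<le> height (take k (Lam i # a @ Rho i # b))" for k
    using a b by (cases "k \<le> Suc (length a)") (auto simp: balanced_def height_take_Cons)
  ultimately show ?thesis using a b by (simp add: balanced_def)
qed

lemma rising_Lam:
  assumes b: "balanced b" and s: "rising s"
  shows "rising (Lam i # b @ s)"
proof -
  obtain l where "nf s = Some ([], l)" using nf_rising[OF s] by blast
  then have "nonzero (Lam i # b @ s)"
    by (simp add: nonzero_def nf_Cons nf_append nf_act_if_nf_rho_only[OF nf_balanced[OF b]])
  moreover have "1 \<le> height (take k (Lam i # b @ s))" if "0 < k" for k
  proof -
    have "0 \<le> height (take (k - 1) (b @ s))"
      using b rising_prefix_height_nonneg[OF s] by (cases "k - 1 \<le> length b") (auto simp: balanced_def)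
    then show ?thesis using that by (simp add: height_take_Cons)
  qed
  ultimately show ?thesis by (simp add: rising_def)
qed

lemma first_descent_split:
  assumes v: "height v = -1" and ge: "\<And>k. -1 \<le> height (take k v)"
  obtains a j b where "v = a @ Rho j # b"
    and "height a = 0" "\<And>k. 0 \<le> height (take k a)"
    and "height b = 0" "\<And>k. 0 \<le> height (take k b)"
proof -
  define k where "k = (LEAST k. height (take k v) = -1)"
  have hk: "height (take k v) = -1" unfolding k_def by (rule LeastI[of _ "length v"]) (simp add: v)
  have "k \<le> length v" unfolding k_def by (rule Least_le) (simp add: v)
  have above: "j < k \<Longrightarrow> 0 \<le> height (take j v)" for j
    using not_less_Least[of j "\<lambda>k. height (take k v) = -1"] ge[of j] unfolding k_def by linarith
  obtain k' where k': "k = Suc k'" using hk by (cases k) auto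
  have k'v: "k' < length v" using \<open>k \<le> length v\<close> k' by simp
  have "letter_height (v ! k') = -1" and ha: "height (take k' v) = 0"
    using height_take_Suc[OF k'v] hk above[of k'] k' by (cases "v ! k'"; simp)+
  then obtain j where "v ! k' = Rho j" by (cases "v ! k'") auto
  then have split: "v = take k' v @ Rho j # drop (Suc k') v"
    using id_take_nth_drop[OF k'v] by simp
  have a: "0 \<le> height (take m (take k' v))" for m
    using above[of "min m k'"] k' by (simp add: min_def)
  have b: "0 \<le> height (take m (drop (Suc k') v))" for m
    using height_take_drop[of m "Suc k'" v] ge[of "Suc k' + m"] hk k' by simp
  have hb: "height (drop (Suc k') v) = 0"
    using height_take_drop[of "length v" "Suc k'" v] v hk k' by simp
  show ?thesis using that[OF split ha a hb b] .
qed

lemma last_zero_split: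
  assumes ge: "\<And>k. 0 \<le> height (take k v)"
  obtains b s where "v = b @ s" and "height b = 0" "\<And>k. 0 \<le> height (take k b)"
    and "\<And>k. 0 < k \<Longrightarrow> k \<le> length s \<Longrightarrow> 1 \<le> height (take k s)"
proof -
  define P where "P k \<longleftrightarrow> k \<le> length v \<and> height (take k v) = 0" for k
  define k where "k = (GREATEST k. P k)"
  have Pk: "P k" unfolding k_def by (rule GreatestI_nat[of P 0 "length v"]) (auto simp: P_def)
  have last: "P j \<Longrightarrow> j \<le> k" for j
    unfolding k_def by (rule Greatest_le_nat[of P j "length v"]) (auto simp: P_def)
  have "0 \<le> height (take m (take k v))" for m
    using ge[of "min m k"] by (simp add: min_def)
  moreover have "1 \<le> height (take m (drop k v))" if "0 < m" "m \<le> length (drop k v)" for m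
  proof -
    have "\<not> P (k + m)" using last[of "k + m"] that(1) by linarith
    then have "height (take (k + m) v) \<noteq> 0" using that Pk by (auto simp: P_def)
    then show ?thesis using height_take_drop[of m k v] ge[of "k + m"] Pk by (simp add: P_def)
  qed
  ultimately show ?thesis using that[of "take k v" "drop k v"] Pk by (simp add: P_def)
qed

lemma balanced_Lam_Cons_split:
  assumes h: "balanced (Lam i # v)"
  obtains a b where "v = a @ Rho i # b" "balanced a" "balanced b"
proof -
  have nz: "nonzero (Lam i # v)" using h by (simp add: balanced_def)
  have "height v = -1" using h by (simp add: balanced_def)
  moreover have "-1 \<le> height (take k v)" for k
  proof -
    have "0 \<le> height (take (Suc k) (Lam i # v))" using h unfolding balanced_def by blast
    then show ?thesis by simp
  qed
  ultimately obtain a j b where v: "v = a @ Rho j # b"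
    and a: "height a = 0" "\<And>k. 0 \<le> height (take k a)"
    and b: "height b = 0" "\<And>k. 0 \<le> height (take k b)"
    by (rule first_descent_split) blast
  have "nonzero a" "nonzero b"
    using nonzero_factor[of "[Lam i]" a "Rho j # b"] nonzero_factor[of "Lam i # a @ [Rho j]" b "[]"]
      nz v by auto
  then have ha: "balanced a" and hb: "balanced b" using a b by (auto simp: balanced_def)
  have "i = j"
  proof (rule ccontr)
    assume "i \<noteq> j"
    then have "nf (Lam i # a @ Rho j # b) = None"
      by (simp add: nf_Cons nf_append nf_balanced[OF hb] nf_act_if_nf_rho_only[OF nf_balanced[OF ha]])
    then show False using nz v by (simp add: nonzero_def)
  qed
  then show ?thesis using that v ha hb by blast
qed

lemma balanced_Cons_cases:
  assumes "balanced (c # v)"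
  obtains (One) i where "c = One i" "balanced v"
  | (Lam) i a b where "c = Lam i" "v = a @ Rho i # b" "balanced a" "balanced b"
proof (cases c)
  case (One i)
  have "nonzero v" using assms nonzero_appendD[of "[c]" v] by (simp add: balanced_def)
  moreover have "0 \<le> height (take k v)" for k
  proof -
    have "0 \<le> height (take (Suc k) (c # v))" using assms unfolding balanced_def by blast
    then show ?thesis using One by simp
  qed
  ultimately show ?thesis using that(1) One assms by (simp add: balanced_def)
next
  case (Rho i)
  have "0 \<le> height (take 1 (c # v))" using assms unfolding balanced_def by blast
  then show ?thesis using Rho by simp
next
  case (Lam i)
  then show ?thesis using assms that(2) by (auto elim: balanced_Lam_Cons_split)
qed

lemma rising_Cons_split:
  assumes h: "rising (c # v)"
  obtains i b s where "c = Lam i" "v = b @ s" "balanced b" "rising s"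
proof -
  have nz: "nonzero (c # v)"
    and pos: "\<And>k. 0 < k \<Longrightarrow> k \<le> length (c # v) \<Longrightarrow> 1 \<le> height (take k (c # v))"
    using h unfolding rising_def by blast+
  obtain i where c: "c = Lam i" using pos[of 1] by (cases c) auto
  have "0 \<le> height (take k v)" for k
    using pos[of "Suc (min k (length v))"] c by (cases "k \<le> length v") (auto simp: min_def)
  then obtain b s where v: "v = b @ s" and b: "height b = 0" "\<And>k. 0 \<le> height (take k b)"
    and s: "\<And>k. 0 < k \<Longrightarrow> k \<le> length s \<Longrightarrow> 1 \<le> height (take k s)"
    by (rule last_zero_split) blast
  have "nonzero b" "nonzero s"
    using nonzero_factor[of "[c]" b s] nonzero_factor[of "c # b" s "[]"] nz v by auto
  then show ?thesis using that c v b s by (simp add: balanced_def rising_def)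
qed

lemma balanced_Rho_split_unique:
  assumes "balanced a" "balanced a'" "a @ Rho i # b = a' @ Rho i' # b'"
  shows "a = a' \<and> i = i' \<and> b = b'"
proof -
  have shorter: False
    if "balanced a" "balanced a'" "a @ Rho i # b = a' @ Rho i' # b'" "length a < length a'"
    for a a' i i' b b'
  proof -
    have "take (Suc (length a)) a' = a @ [Rho i]"
      using arg_cong[OF that(3), of "take (Suc (length a))"] that(4) by simp
    then have "height (take (Suc (length a)) a') = -1" using that(1) by (simp add: balanced_def)
    moreover have "0 \<le> height (take (Suc (length a)) a')" using that(2) by (simp add: balanced_def)
    ultimately show False by simp
  qed
  have "length a = length a'"
    using shorter[of a a' i b i' b'] shorter[of a' a i' b' i b] assms by (metis linorder_neqE_nat)
  then show ?thesis using assms(3) by simp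
qed

lemma balanced_rising_split_unique:
  assumes "balanced b" "balanced b'" "rising s" "rising s'" "b @ s = b' @ s'"
  shows "b = b' \<and> s = s'"
proof -
  have shorter: False
    if bal: "balanced b" "balanced b'" and s: "rising s"
      and eq: "b @ s = b' @ s'" and len: "length b < length b'" for b b' s s'
  proof -
    obtain t where t: "b' = b @ t" "s = t @ s'" "t \<noteq> []"
      using eq len by (auto simp: append_eq_append_conv2)
    then have "height t = 0" using bal by (simp add: balanced_def)
    moreover have "1 \<le> height (take (length t) s)" using s t unfolding rising_def by auto
    ultimately show False using t by simp
  qed
  have "length b = length b'"
    using shorter[of b b' s s'] shorter[of b' b s' s] assms by (metis linorder_neqE_nat)
  then show ?thesis using assms(5) by simp
qed

definition balanced_cut :: "sym list \<Rightarrow> nat" where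
  "balanced_cut u = (LEAST k. 0 < k \<and> balanced (drop k u))"

definition rising_cut :: "sym list \<Rightarrow> nat" where
  "rising_cut u = (LEAST k. 0 < k \<and> rising (drop k u))"

lemma balanced_cut_One_Cons: "balanced v \<Longrightarrow> balanced_cut (One i # v) = 1"
  unfolding balanced_cut_def by (rule Least_equality) auto

lemma balanced_cut_Lam_Rho:
  assumes a: "balanced a" and b: "balanced b"
  shows "balanced_cut (Lam i # a @ Rho i # b) = length a + 2"
  unfolding balanced_cut_def
proof (rule Least_equality)
  show "0 < length a + 2 \<and> balanced (drop (length a + 2) (Lam i # a @ Rho i # b))"
    using b by simp
next
  fix k
  assume k: "0 < k \<and> balanced (drop k (Lam i # a @ Rho i # b))"
  show "length a + 2 \<le> k"
  proof (rule ccontr)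
    assume "\<not> length a + 2 \<le> k"
    then obtain k' where k': "k = Suc k'" "k' \<le> length a" using k by (cases k) auto
    have "0 \<le> height (take k' a)" "height a = 0" "height b = 0"
      using a b unfolding balanced_def by blast+
    then have "height (drop k' a @ Rho i # b) < 0"
      using height_append[of "take k' a" "drop k' a"] by simp
    then show False using k k' by (simp add: balanced_def)
  qed
qed

lemma rising_cut_Lam:
  assumes b: "balanced b" and s: "rising s"
  shows "rising_cut (Lam i # b @ s) = length b + 1"
  unfolding rising_cut_def
proof (rule Least_equality)
  show "0 < length b + 1 \<and> rising (drop (length b + 1) (Lam i # b @ s))"
    using s by simp
next
  fix k
  assume k: "0 < k \<and> rising (drop k (Lam i # b @ s))"
  show "length b + 1 \<le> k"
  proof (rule ccontr)
    assume "\<not> length b + 1 \<le> k"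
    then obtain k' where k': "k = Suc k'" "k' < length b" using k by (cases k) auto
    have "0 \<le> height (take k' b)" "height b = 0" using b unfolding balanced_def by blast+
    then have "height (drop k' b) \<le> 0"
      using height_append[of "take k' b" "drop k' b"] by simp
    moreover have "1 \<le> height (take (length (drop k' b)) (drop k' b @ s))"
    proof -
      have "rising (drop k' b @ s)" using k k' by simp
      then show ?thesis using k' unfolding rising_def by (auto dest!: spec[of _ "length b - k'"])
    qed
    ultimately show False by simp
  qed
qed

section \<open>Rotations and cyclically nonzero words\<close>

lemma rotate_inj: "rotate m xs = rotate m ys \<Longrightarrow> xs = ys"
  by (induction m) (auto dest: injD[OF inj_rotate1])

lemma rotate_eq_rotate_le: "rotate m u = rotate m' u' \<Longrightarrow> m \<le> m' \<Longrightarrow> u = rotate (m' - m) u'"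
  by (rule rotate_inj[of m]) (simp add: rotate_rotate)

lemma rotation_of_representative:
  fixes f :: "'a list \<Rightarrow> nat" and G :: "'a list set"
  assumes "0 < length w" and "rotate c w \<in> G"
    and next_rep: "\<And>u. u \<in> G \<Longrightarrow> 0 < f u \<and> rotate (f u) u \<in> G"
  obtains u m where "u \<in> G" "m < f u" "rotate m u = w"
proof -
  define n where "n = length w"
  \<comment> \<open>rotating by \<open>n - m\<close> undoes a rotation by \<open>m\<close>; take the least \<open>m\<close> that leads back into \<open>G\<close>\<close>
  define K where "K = {m. m \<le> n \<and> rotate (n - m) w \<in> G}"
  have "n - c mod n \<in> K"
    using assms(1,2) by (simp add: K_def n_def rotate_conv_mod[of c w])
  moreover have "finite K" unfolding K_def by (rule finite_subset[of _ "{..n}"]) auto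
  ultimately have "Min K \<in> K" and min: "\<And>k. k \<in> K \<Longrightarrow> Min K \<le> k"
    by (auto intro: Min_in)
  define m where "m = Min K"
  define u where "u = rotate (n - m) w"
  have u: "u \<in> G" and "m \<le> n" using \<open>Min K \<in> K\<close> by (auto simp: K_def m_def u_def)
  have "rotate m u = w" using \<open>m \<le> n\<close> by (simp add: u_def n_def rotate_rotate)
  moreover have "m < f u"
  proof (rule ccontr)
    assume "\<not> m < f u"
    then have "n - (m - f u) = f u + (n - m)" using \<open>m \<le> n\<close> by simp
    then have "rotate (n - (m - f u)) w \<in> G"
      using next_rep[OF u] by (simp add: u_def rotate_rotate)
    then have "m - f u \<in> K" using \<open>m \<le> n\<close> by (simp add: K_def)
    then show False using min next_rep[OF u] \<open>\<not> m < f u\<close> by (fastforce simp: m_def)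
  qed
  ultimately show ?thesis using that u by blast
qed

lemma card_eq_sum_rotation_gaps:
  fixes f :: "'a list \<Rightarrow> nat" and G W :: "'a list set"
  assumes "finite G" and "0 < n"
    and len: "\<And>u. u \<in> G \<Longrightarrow> length u = n"
    and into: "\<And>u m. u \<in> G \<Longrightarrow> m < f u \<Longrightarrow> rotate m u \<in> W"
    and onto: "\<And>w. w \<in> W \<Longrightarrow> \<exists>c. rotate c w \<in> G"
    and next_rep: "\<And>u. u \<in> G \<Longrightarrow> 0 < f u \<and> rotate (f u) u \<in> G"
    and gap: "\<And>u e. u \<in> G \<Longrightarrow> 0 < e \<Longrightarrow> e < f u \<Longrightarrow> rotate e u \<notin> G"
  shows "card W = (\<Sum>u\<in>G. f u)"
proof -
  let ?S = "SIGMA u:G. {..<f u}"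
  let ?h = "\<lambda>(u, m). rotate m u"
  have same: "u = u' \<and> m = m'"
    if "u \<in> G" "u' \<in> G" "m' < f u'" "m \<le> m'" "rotate m u = rotate m' u'" for u u' m m'
    using rotate_eq_rotate_le[OF that(5,4)] gap[OF that(2), of "m' - m"] that(1,3,4)
    by (cases "m = m'") auto
  have "inj_on ?h ?S"
    by (rule inj_onI) (clarsimp, metis same nat_le_linear)
  moreover have "W \<subseteq> ?h ` ?S"
  proof
    fix w
    assume "w \<in> W"
    then obtain c where c: "rotate c w \<in> G" using onto by blast
    then have "0 < length w" using len \<open>0 < n\<close> by fastforce
    then obtain u m where "u \<in> G" "m < f u" "rotate m u = w"
      using c next_rep by (rule rotation_of_representative)
    then show "w \<in> ?h ` ?S" by force
  qed
  moreover have "?h ` ?S \<subseteq> W" using into by auto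
  ultimately have "card W = card ?S" by (metis card_image subset_antisym)
  also have "\<dots> = (\<Sum>u\<in>G. f u)" using \<open>finite G\<close> by (simp add: card_SigmaI)
  finally show ?thesis .
qed

definition cyclically_nonzero :: "sym list \<Rightarrow> bool" where
  "cyclically_nonzero w \<longleftrightarrow> (\<forall>k. nonzero (concat (replicate k w)))"

lemma concat_replicate_Suc_rotate:
  "concat (replicate (Suc k) w) = take d w @ concat (replicate k (drop d w @ take d w)) @ drop d w"
proof (induction k)
  case 0
  then show ?case by simp
next
  case (Suc k)
  have "concat (replicate (Suc (Suc k)) w) = (take d w @ drop d w) @ concat (replicate (Suc k) w)"
    by simp
  also have "\<dots> = take d w @ (drop d w @ take d w) @ concat (replicate k (drop d w @ take d w)) @ drop d w"
    using Suc by simp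
  finally show ?case by simp
qed

lemma cyclically_nonzero_rotate:
  assumes "cyclically_nonzero w"
  shows "cyclically_nonzero (rotate m w)"
  unfolding cyclically_nonzero_def
proof
  fix k
  define d where "d = m mod length w"
  have "nonzero (concat (replicate (Suc k) w))" using assms unfolding cyclically_nonzero_def by blast
  then have "nonzero (take d w @ concat (replicate k (rotate m w)) @ drop d w)"
    by (simp only: concat_replicate_Suc_rotate[of k w d] rotate_drop_take d_def)
  then show "nonzero (concat (replicate k (rotate m w)))" by (rule nonzero_factor)
qed

lemma cyclically_nonzero_imp_nonzero: "cyclically_nonzero w \<Longrightarrow> nonzero w"
  unfolding cyclically_nonzero_def by (drule spec[of _ 1]) simp

lemma cyclically_nonzero_if_balanced: "balanced u \<Longrightarrow> cyclically_nonzero u"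
  unfolding cyclically_nonzero_def using balanced_concat_replicate balanced_def by blast

lemma cyclically_nonzero_if_rising: "rising u \<Longrightarrow> cyclically_nonzero u"
  unfolding cyclically_nonzero_def using rising_concat_replicate rising_def by blast

lemma mirror_concat_replicate: "mirror (concat (replicate k w)) = concat (replicate k (mirror w))"
proof (induction k)
  case 0
  then show ?case by (simp add: mirror_def)
next
  case (Suc k)
  have "concat (replicate k (mirror w)) @ mirror w = mirror w @ concat (replicate k (mirror w))"
    by (induction k) auto
  then show ?case using Suc by simp
qed

lemma cyclically_nonzero_mirror: "cyclically_nonzero w \<Longrightarrow> cyclically_nonzero (mirror w)"
  unfolding cyclically_nonzero_def by (metis mirror_concat_replicate nonzero_mirror_iff)

lemma height_rotate [simp]: "height (rotate m w) = height w"
  by (simp add: rotate_drop_take) (metis add.commute append_take_drop_id height_append)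

section \<open>Counting cyclically nonzero words\<close>

lemma balanced_take_if_balanced_drop:
  assumes "balanced u" and "balanced (drop k u)"
  shows "balanced (take k u)"
proof -
  have "nonzero (take k u)" using assms(1) nonzero_appendD[of "take k u" "drop k u"] by (simp add: balanced_def)
  moreover have "height (take k u) = 0"
    using assms height_append[of "take k u" "drop k u"] by (simp add: balanced_def)
  moreover have "0 \<le> height (take j (take k u))" for j
    using assms(1) unfolding balanced_def by (simp add: take_take)
  ultimately show ?thesis by (simp add: balanced_def)
qed

lemma rising_take: "rising u \<Longrightarrow> rising (take k u)"
  using nonzero_appendD[of "take k u" "drop k u"] by (simp add: rising_def take_take)

lemma balanced_cut_spec:
  assumes "u \<noteq> []"
  shows "0 < balanced_cut u" "balanced_cut u \<le> length u" "balanced (drop (balanced_cut u) u)"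
proof -
  have "0 < length u \<and> balanced (drop (length u) u)" using assms by simp
  then show "0 < balanced_cut u" "balanced_cut u \<le> length u" "balanced (drop (balanced_cut u) u)"
    unfolding balanced_cut_def by (metis (mono_tags, lifting) LeastI Least_le)+
qed

lemma rising_cut_spec:
  assumes "u \<noteq> []"
  shows "0 < rising_cut u" "rising_cut u \<le> length u" "rising (drop (rising_cut u) u)"
proof -
  have "0 < length u \<and> rising (drop (length u) u)" using assms by simp
  then show "0 < rising_cut u" "rising_cut u \<le> length u" "rising (drop (rising_cut u) u)"
    unfolding rising_cut_def by (metis (mono_tags, lifting) LeastI Least_le)+
qed

lemma balanced_rotate_balanced_cut:
  assumes "balanced u" and "u \<noteq> []"
  shows "balanced (rotate (balanced_cut u) u)"
proof -
  note cut = balanced_cut_spec[OF assms(2)]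
  show ?thesis
  proof (cases "balanced_cut u = length u")
    case True
    then show ?thesis using assms by simp
  next
    case False
    then have "rotate (balanced_cut u) u = drop (balanced_cut u) u @ take (balanced_cut u) u"
      using cut by (simp add: rotate_drop_take)
    then show ?thesis
      using cut balanced_take_if_balanced_drop[OF assms(1)] by (simp add: balanced_append)
  qed
qed

lemma rising_rotate_rising_cut:
  assumes "rising u" and "u \<noteq> []"
  shows "rising (rotate (rising_cut u) u)"
proof -
  note cut = rising_cut_spec[OF assms(2)]
  show ?thesis
  proof (cases "rising_cut u = length u")
    case True
    then show ?thesis using assms by simp
  next
    case False
    then have "rotate (rising_cut u) u = drop (rising_cut u) u @ take (rising_cut u) u"
      using cut by (simp add: rotate_drop_take)
    then show ?thesis using cut rising_take[OF assms(1)] by (simp add: rising_append)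
  qed
qed

lemma not_balanced_rotate_below_balanced_cut:
  assumes u: "balanced u" "u \<noteq> []" and e: "0 < e" "e < balanced_cut u"
  shows "\<not> balanced (rotate e u)"
proof
  assume hr: "balanced (rotate e u)"
  have "e < length u" using e balanced_cut_spec[OF u(2)] by linarith
  then have prefix: "take k (drop e u) = take (min k (length u - e)) (rotate e u)" for k
    by (simp add: rotate_drop_take min_def)
  have nz: "nonzero (drop e u)" using u(1) nonzero_appendD[of "take e u" "drop e u"] by (simp add: balanced_def)
  have pre: "0 \<le> height (take k (drop e u))" for k
    unfolding prefix using hr by (simp add: balanced_def)
  have "0 \<le> height (take e u)" "height u = 0" using u(1) unfolding balanced_def by blast+
  then have "height (drop e u) \<le> 0" using height_append[of "take e u" "drop e u"] by simp
  moreover have "0 \<le> height (drop e u)" using pre[of "length (drop e u)"] by simp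
  ultimately have "balanced (drop e u)" using nz pre by (simp add: balanced_def)
  then show False
    using not_less_Least[of e "\<lambda>k. 0 < k \<and> balanced (drop k u)"] e by (simp add: balanced_cut_def)
qed

lemma not_rising_rotate_below_rising_cut:
  assumes "u \<noteq> []" and e: "0 < e" "e < rising_cut u"
  shows "\<not> rising (rotate e u)"
proof
  assume "rising (rotate e u)"
  moreover have "e < length u" using e rising_cut_spec[OF \<open>u \<noteq> []\<close>] by linarith
  ultimately have "rising (drop e u)"
    using rising_take[of "rotate e u" "length u - e"] by (simp add: rotate_drop_take)
  then show False
    using not_less_Least[of e "\<lambda>k. 0 < k \<and> rising (drop k u)"] e by (simp add: rising_cut_def)
qed

lemma height_take_rotate:
  assumes "c < length w"
  shows "height (take k (rotate c w)) =
    height (take (c + k) w) - height (take c w) + height (take (min (k - (length w - c)) c) w)"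
  using assms by (simp add: rotate_drop_take height_take_drop take_take)

text \<open>Cycle lemma: start the word right after the last minimum of its prefix heights.\<close>

lemma exists_rotation_nonneg_prefix_heights:
  assumes "w \<noteq> []" and "0 \<le> height w"
  shows "\<exists>c. (\<forall>k. 0 \<le> height (take k (rotate c w))) \<and>
    (0 < height w \<longrightarrow> (\<forall>k. 0 < k \<and> k \<le> length w \<longrightarrow> 1 \<le> height (take k (rotate c w))))"
proof -
  define n where "n = length w"
  define H where "H j = height (take j w)" for j
  define m where "m = Min (H ` {..<n})"
  define C where "C = {j. j < n \<and> H j = m}"
  have n: "0 < n" using assms(1) by (simp add: n_def)
  have "m \<in> H ` {..<n}" unfolding m_def using n by (intro Min_in) auto
  then have "C \<noteq> {}" "finite C" by (auto simp: C_def)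
  then have "Max C \<in> C" by (rule Max_in[rotated])
  define c where "c = Max C"
  have c: "c < n" "H c = m" using \<open>Max C \<in> C\<close> by (auto simp: C_def c_def)
  have last: "j < n \<Longrightarrow> H j = m \<Longrightarrow> j \<le> c" for j
    unfolding c_def using \<open>finite C\<close> by (intro Max_ge) (auto simp: C_def)
  have min: "j < n \<Longrightarrow> m \<le> H j" for j unfolding m_def by (intro Min_le) auto
  have m0: "m \<le> 0" using min[of 0] n by (simp add: H_def)
  have Hn: "n \<le> j \<Longrightarrow> H j = height w" for j by (simp add: H_def n_def)
  have rot: "height (take k (rotate c w)) = H (c + k) - m + H (min (k - (n - c)) c)" for k
    using height_take_rotate[of c w k] c by (simp add: H_def n_def)
  have wrap: "m \<le> H (min (k - (n - c)) c)" for k using min c by (simp add: min_def)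
  have pos: "1 \<le> height (take k (rotate c w))" if "0 < height w" "0 < k" for k
  proof (cases "c + k < n")
    case True
    then have "m < H (c + k)" using min[of "c + k"] last[of "c + k"] \<open>0 < k\<close> by fastforce
    then show ?thesis using rot[of k] True by (simp add: H_def)
  next
    case False
    then show ?thesis using rot[of k] wrap[of k] Hn[of "c + k"] m0 that by simp
  qed
  have "0 \<le> height (take k (rotate c w))" for k
  proof (cases "c + k < n")
    case True
    then show ?thesis using rot[of k] min[of "c + k"] by (simp add: H_def)
  next
    case False
    then show ?thesis using rot[of k] wrap[of k] Hn[of "c + k"] m0 assms(2) by simp
  qed
  then show ?thesis using pos n_def by blast
qed

definition balanced_words :: "sym set \<Rightarrow> nat \<Rightarrow> sym list set" where
  "balanced_words A n = {u. length u = n \<and> set u \<subseteq> A \<and> balanced u}"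

definition rising_words :: "sym set \<Rightarrow> nat \<Rightarrow> sym list set" where
  "rising_words A n = {u. length u = n \<and> set u \<subseteq> A \<and> rising u}"

definition cyclic_words :: "sym set \<Rightarrow> nat \<Rightarrow> sym list set" where
  "cyclic_words A n = {w. length w = n \<and> set w \<subseteq> A \<and> cyclically_nonzero w}"

lemma finite_words_length_eq: "finite A \<Longrightarrow> finite {u. length u = n \<and> set u \<subseteq> A}"
  using finite_lists_length_eq[of A n] by (simp add: conj_commute)

lemma finite_balanced_words: "finite A \<Longrightarrow> finite (balanced_words A n)"
  by (rule finite_subset[OF _ finite_words_length_eq[of A n]]) (auto simp: balanced_words_def)

lemma finite_rising_words: "finite A \<Longrightarrow> finite (rising_words A n)"
  by (rule finite_subset[OF _ finite_words_length_eq[of A n]]) (auto simp: rising_words_def)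

lemma finite_cyclic_words: "finite A \<Longrightarrow> finite (cyclic_words A n)"
  by (rule finite_subset[OF _ finite_words_length_eq[of A n]]) (auto simp: cyclic_words_def)

lemma card_cyclic_words_height_zero:
  assumes "finite A" and n: "0 < n"
  shows "card {w \<in> cyclic_words A n. height w = 0} = (\<Sum>u\<in>balanced_words A n. balanced_cut u)"
proof (rule card_eq_sum_rotation_gaps[OF finite_balanced_words[OF assms(1)] n])
  fix u m
  assume "u \<in> balanced_words A n"
  then have "balanced u" "length u = n" "set u \<subseteq> A" by (auto simp: balanced_words_def)
  then show "rotate m u \<in> {w \<in> cyclic_words A n. height w = 0}"
    using cyclically_nonzero_rotate[OF cyclically_nonzero_if_balanced]
    by (auto simp: cyclic_words_def balanced_def)
next
  fix w
  assume w: "w \<in> {w \<in> cyclic_words A n. height w = 0}"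
  then have "w \<noteq> []" using n by (auto simp: cyclic_words_def)
  then obtain c where "\<forall>k. 0 \<le> height (take k (rotate c w))"
    using exists_rotation_nonneg_prefix_heights[of w] w by auto
  then have "balanced (rotate c w)"
    using w cyclically_nonzero_imp_nonzero[OF cyclically_nonzero_rotate]
    by (auto simp: balanced_def cyclic_words_def)
  then show "\<exists>c. rotate c w \<in> balanced_words A n"
    using w by (auto simp: balanced_words_def cyclic_words_def)
next
  fix u
  assume u: "u \<in> balanced_words A n"
  then have "u \<noteq> []" using n by (auto simp: balanced_words_def)
  with u show "0 < balanced_cut u \<and> rotate (balanced_cut u) u \<in> balanced_words A n"
    using balanced_cut_spec balanced_rotate_balanced_cut by (auto simp: balanced_words_def)
  fix e
  assume "0 < e" "e < balanced_cut u"
  with u \<open>u \<noteq> []\<close> show "rotate e u \<notin> balanced_words A n"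
    using not_balanced_rotate_below_balanced_cut by (auto simp: balanced_words_def)
qed (simp add: balanced_words_def)

lemma card_cyclic_words_height_pos:
  assumes "finite A" and n: "0 < n"
  shows "card {w \<in> cyclic_words A n. 0 < height w} = (\<Sum>u\<in>rising_words A n. rising_cut u)"
proof (rule card_eq_sum_rotation_gaps[OF finite_rising_words[OF assms(1)] n])
  fix u m
  assume "u \<in> rising_words A n" "m < rising_cut u"
  moreover from this have "u \<noteq> []" using n by (auto simp: rising_words_def)
  ultimately show "rotate m u \<in> {w \<in> cyclic_words A n. 0 < height w}"
    by (auto simp: rising_words_def cyclic_words_def rising_height_pos
        intro: cyclically_nonzero_rotate cyclically_nonzero_if_rising)
next
  fix w
  assume w: "w \<in> {w \<in> cyclic_words A n. 0 < height w}"
  then have "w \<noteq> []" "0 \<le> height w" "0 < height w" using n by (auto simp: cyclic_words_def)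
  then obtain c where "\<forall>k. 0 < k \<and> k \<le> length w \<longrightarrow> 1 \<le> height (take k (rotate c w))"
    using exists_rotation_nonneg_prefix_heights[of w] by blast
  then have "rising (rotate c w)"
    using w cyclically_nonzero_imp_nonzero[OF cyclically_nonzero_rotate]
    by (auto simp: rising_def cyclic_words_def)
  then show "\<exists>c. rotate c w \<in> rising_words A n"
    using w by (auto simp: rising_words_def cyclic_words_def)
next
  fix u
  assume u: "u \<in> rising_words A n"
  then have "u \<noteq> []" using n by (auto simp: rising_words_def)
  with u show "0 < rising_cut u \<and> rotate (rising_cut u) u \<in> rising_words A n"
    using rising_cut_spec rising_rotate_rising_cut by (auto simp: rising_words_def)
  fix e
  assume "0 < e" "e < rising_cut u"
  with u \<open>u \<noteq> []\<close> show "rotate e u \<notin> rising_words A n"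
    using not_rising_rotate_below_rising_cut by (auto simp: rising_words_def)
qed (simp add: rising_words_def)

lemma card_cyclic_words_height_neg:
  assumes "\<And>c. c \<in> A \<Longrightarrow> swap_letter c \<in> A"
  shows "card {w \<in> cyclic_words A n. height w < 0} = card {w \<in> cyclic_words A n. 0 < height w}"
proof -
  have "set (mirror w) \<subseteq> A" if "set w \<subseteq> A" for w
    unfolding set_mirror using assms that by blast
  then have "bij_betw mirror {w \<in> cyclic_words A n. 0 < height w} {w \<in> cyclic_words A n. height w < 0}"
    by (intro bij_betw_byWitness[of _ mirror]) (auto simp: cyclic_words_def intro: cyclically_nonzero_mirror)
  then show ?thesis by (simp add: bij_betw_same_card)
qed

lemma card_cyclic_words:
  assumes "finite A" and "\<And>c. c \<in> A \<Longrightarrow> swap_letter c \<in> A" and "0 < n"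
  shows "card (cyclic_words A n) =
    (\<Sum>u\<in>balanced_words A n. balanced_cut u) + 2 * (\<Sum>u\<in>rising_words A n. rising_cut u)"
proof -
  let ?W = "cyclic_words A n"
  have "?W = {w \<in> ?W. height w = 0} \<union> ({w \<in> ?W. 0 < height w} \<union> {w \<in> ?W. height w < 0})"
    by auto
  also have "card \<dots> = card {w \<in> ?W. height w = 0} + (card {w \<in> ?W. 0 < height w} + card {w \<in> ?W. height w < 0})"
    using finite_cyclic_words[OF assms(1), of n]
    by (subst card_Un_disjoint, auto)+
  finally show ?thesis
    using card_cyclic_words_height_zero card_cyclic_words_height_pos card_cyclic_words_height_neg assms
    by simp
qed

lemma balanced_words_Suc:
  "balanced_words A (Suc n) =
     (\<lambda>(i, v). One i # v) ` ({i. One i \<in> A} \<times> balanced_words A n) \<union>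
     (\<lambda>(i, j, a, b). Lam i # a @ Rho i # b) `
        (SIGMA i:{i. Lam i \<in> A \<and> Rho i \<in> A}. SIGMA j:{..<n}.
           balanced_words A j \<times> balanced_words A (n - 1 - j))"
  (is "?L = ?S1 \<union> ?S2")
proof
  show "?L \<subseteq> ?S1 \<union> ?S2"
  proof
    fix u
    assume u: "u \<in> ?L"
    then obtain c v where uv: "u = c # v" by (cases u) (auto simp: balanced_words_def)
    have lv: "length v = n" and A: "c \<in> A" "set v \<subseteq> A" and hb: "balanced (c # v)"
      using u uv by (auto simp: balanced_words_def)
    from hb show "u \<in> ?S1 \<union> ?S2"
    proof (cases rule: balanced_Cons_cases)
      case (One i)
      then have "(i, v) \<in> {i. One i \<in> A} \<times> balanced_words A n"
        using A lv by (auto simp: balanced_words_def)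
      then show ?thesis using uv One by (auto intro!: image_eqI[of _ _ "(i, v)"])
    next
      case (Lam i a b)
      then have "(i, length a, a, b) \<in> (SIGMA i:{i. Lam i \<in> A \<and> Rho i \<in> A}. SIGMA j:{..<n}.
           balanced_words A j \<times> balanced_words A (n - 1 - j))"
        using A lv by (auto simp: balanced_words_def)
      then show ?thesis using uv Lam by (auto intro!: image_eqI[of _ _ "(i, length a, a, b)"])
    qed
  qed
  show "?S1 \<union> ?S2 \<subseteq> ?L"
    by (auto simp: balanced_words_def intro: balanced_One_Cons balanced_Lam_Rho)
qed

lemma rising_words_Suc:
  "rising_words A (Suc n) =
     (\<lambda>(i, j, b, s). Lam i # b @ s) `
       (SIGMA i:{i. Lam i \<in> A}. SIGMA j:{..n}. balanced_words A j \<times> rising_words A (n - j))"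
  (is "?L = ?S")
proof
  show "?L \<subseteq> ?S"
  proof
    fix u
    assume u: "u \<in> ?L"
    then obtain c v where uv: "u = c # v" by (cases u) (auto simp: rising_words_def)
    have lv: "length v = n" and A: "set u \<subseteq> A" and hr: "rising (c # v)"
      using u uv by (auto simp: rising_words_def)
    from hr obtain i b s where "c = Lam i" "v = b @ s" "balanced b" "rising s"
      by (rule rising_Cons_split)
    moreover from this have "(i, length b, b, s) \<in>
        (SIGMA i:{i. Lam i \<in> A}. SIGMA j:{..n}. balanced_words A j \<times> rising_words A (n - j))"
      using A lv uv by (auto simp: balanced_words_def rising_words_def)
    ultimately show "u \<in> ?S" using uv by (auto intro!: image_eqI[of _ _ "(i, length b, b, s)"])
  qed
  show "?S \<subseteq> ?L"
    by (auto simp: balanced_words_def rising_words_def intro: rising_Lam)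
qed

lemma sum_SIGMA_SIGMA_Times:
  assumes "finite I" "finite J" "\<And>j. finite (X j)" "\<And>j. finite (Y j)"
  shows "(\<Sum>x\<in>(SIGMA i:I. SIGMA j:J. X j \<times> Y j). h x) =
    (\<Sum>i\<in>I. \<Sum>j\<in>J. \<Sum>a\<in>X j. \<Sum>b\<in>Y j. h (i, j, a, b))"
proof -
  have "(\<Sum>i\<in>I. \<Sum>j\<in>J. \<Sum>a\<in>X j. \<Sum>b\<in>Y j. h (i, j, a, b)) =
      (\<Sum>i\<in>I. \<Sum>j\<in>J. \<Sum>p\<in>X j \<times> Y j. h (i, j, p))"
    by (simp add: sum.cartesian_product)
  also have "\<dots> = (\<Sum>i\<in>I. \<Sum>q\<in>(SIGMA j:J. X j \<times> Y j). h (i, q))"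
    using assms by (intro sum.cong refl) (simp add: sum.Sigma split_beta)
  also have "\<dots> = (\<Sum>x\<in>(SIGMA i:I. SIGMA j:J. X j \<times> Y j). h x)"
    using assms by (simp add: sum.Sigma split_beta)
  finally show ?thesis by simp
qed

lemma finite_constructor_indices: "inj f \<Longrightarrow> finite A \<Longrightarrow> finite {i. f i \<in> A}"
  using finite_vimageI[of A f] by (simp add: vimage_def)

lemma sum_balanced_words_Suc:
  fixes g :: "sym list \<Rightarrow> nat"
  assumes A: "finite A"
  shows "(\<Sum>u\<in>balanced_words A (Suc n). g u) =
    (\<Sum>i\<in>{i. One i \<in> A}. \<Sum>v\<in>balanced_words A n. g (One i # v)) +
    (\<Sum>i\<in>{i. Lam i \<in> A \<and> Rho i \<in> A}. \<Sum>j<n. \<Sum>a\<in>balanced_words A j.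
       \<Sum>b\<in>balanced_words A (n - 1 - j). g (Lam i # a @ Rho i # b))"
proof -
  let ?I1 = "{i. One i \<in> A}" and ?I2 = "{i. Lam i \<in> A \<and> Rho i \<in> A}"
  let ?D2 = "SIGMA i:?I2. SIGMA j:{..<n}. balanced_words A j \<times> balanced_words A (n - 1 - j)"
  let ?h1 = "\<lambda>(i, v). One i # v" and ?h2 = "\<lambda>(i, j, a, b). Lam i # a @ Rho i # b"
  have fin: "finite ?I1" "finite ?I2" "finite (balanced_words A k)" for k
    using finite_constructor_indices[of One A] finite_constructor_indices[of Lam A] A
    by (auto simp: inj_def finite_balanced_words intro: finite_subset[of ?I2 "{i. Lam i \<in> A}"])
  have "inj_on ?h2 ?D2"
  proof (rule inj_onI)
    fix x y
    assume x: "x \<in> ?D2" and y: "y \<in> ?D2" and eq: "?h2 x = ?h2 y"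
    obtain i j a b where xx: "x = (i, j, a, b)" by (cases x) auto
    obtain i' j' a' b' where yy: "y = (i', j', a', b')" by (cases y) auto
    have "balanced a" "balanced a'" "j = length a" "j' = length a'"
      using x y xx yy by (auto simp: balanced_words_def)
    moreover have "i = i'" "a @ Rho i # b = a' @ Rho i' # b'" using eq xx yy by auto
    ultimately show "x = y" using balanced_Rho_split_unique[of a a' i b i' b'] xx yy by auto
  qed
  then have "(\<Sum>u\<in>?h2 ` ?D2. g u) = (\<Sum>x\<in>?D2. g (?h2 x))"
    by (rule sum.reindex[unfolded comp_def])
  also have "\<dots> = (\<Sum>i\<in>?I2. \<Sum>j<n. \<Sum>a\<in>balanced_words A j.
       \<Sum>b\<in>balanced_words A (n - 1 - j). g (Lam i # a @ Rho i # b))"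
    using fin by (subst sum_SIGMA_SIGMA_Times) auto
  finally have sum2: "(\<Sum>u\<in>?h2 ` ?D2. g u) = \<dots>" .
  have "inj_on ?h1 (?I1 \<times> balanced_words A n)" by (auto simp: inj_on_def)
  then have "(\<Sum>u\<in>?h1 ` (?I1 \<times> balanced_words A n). g u) =
      (\<Sum>x\<in>?I1 \<times> balanced_words A n. g (?h1 x))"
    by (rule sum.reindex[unfolded comp_def])
  also have "\<dots> = (\<Sum>i\<in>?I1. \<Sum>v\<in>balanced_words A n. g (One i # v))"
    by (simp add: sum.cartesian_product case_prod_beta)
  finally have sum1: "(\<Sum>u\<in>?h1 ` (?I1 \<times> balanced_words A n). g u) = \<dots>" .
  have "?h1 ` (?I1 \<times> balanced_words A n) \<inter> ?h2 ` ?D2 = {}" by auto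
  then show ?thesis
    unfolding balanced_words_Suc sum1[symmetric] sum2[symmetric] using fin
    by (intro sum.union_disjoint) auto
qed

lemma sum_rising_words_Suc:
  fixes g :: "sym list \<Rightarrow> nat"
  assumes A: "finite A"
  shows "(\<Sum>u\<in>rising_words A (Suc n). g u) =
    (\<Sum>i\<in>{i. Lam i \<in> A}. \<Sum>j\<le>n. \<Sum>b\<in>balanced_words A j. \<Sum>s\<in>rising_words A (n - j).
       g (Lam i # b @ s))"
proof -
  let ?D = "SIGMA i:{i. Lam i \<in> A}. SIGMA j:{..n}. balanced_words A j \<times> rising_words A (n - j)"
  let ?h = "\<lambda>(i, j, b, s). Lam i # b @ s"
  have "inj_on ?h ?D"
  proof (rule inj_onI)
    fix x y
    assume x: "x \<in> ?D" and y: "y \<in> ?D" and eq: "?h x = ?h y"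
    obtain i j b s where xx: "x = (i, j, b, s)" by (cases x) auto
    obtain i' j' b' s' where yy: "y = (i', j', b', s')" by (cases y) auto
    have "balanced b" "balanced b'" "rising s" "rising s'" "j = length b" "j' = length b'"
      using x y xx yy by (auto simp: balanced_words_def rising_words_def)
    moreover have "i = i'" "b @ s = b' @ s'" using eq xx yy by auto
    ultimately show "x = y" using balanced_rising_split_unique[of b b' s s'] xx yy by auto
  qed
  then show ?thesis
    unfolding rising_words_Suc
    using finite_constructor_indices[of Lam A] A
    by (simp add: sum.reindex sum_SIGMA_SIGMA_Times inj_def finite_balanced_words finite_rising_words)
qed

section \<open>Periodic points\<close>

lemma funpow_shift: "(shift ^^ n) x = (\<lambda>i. x (i + int n))"
  by (induction n arbitrary: x) (auto simp: shift_def fun_eq_iff algebra_simps)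

lemma periodic_mod:
  fixes x :: "int \<Rightarrow> 'a"
  assumes "0 < n" and per: "\<And>i. x (i + int n) = x i"
  shows "x i = x (i mod int n)"
proof -
  have shift_mult: "x (j + int k * int n) = x j" for j k
  proof (induction k arbitrary: j)
    case 0
    then show ?case by simp
  next
    case (Suc k)
    have "x (j + int (Suc k) * int n) = x ((j + int k * int n) + int n)" by (simp add: algebra_simps)
    then show ?case using Suc per by simp
  qed
  have i: "i = i mod int n + (i div int n) * int n" by simp
  show ?thesis
  proof (cases "0 \<le> i div int n")
    case True
    then show ?thesis using shift_mult[of "i mod int n" "nat (i div int n)"] i by simp
  next
    case False
    then show ?thesis
      using shift_mult[of i "nat (- (i div int n))"] by (simp add: minus_div_mult_eq_mod)
  qed
qed

lemma nth_concat_replicate: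
  "t < k * length w \<Longrightarrow> concat (replicate k w) ! t = w ! (t mod length w)"
proof (induction k arbitrary: t)
  case 0
  then show ?case by simp
next
  case (Suc k)
  show ?case
  proof (cases "t < length w")
    case True
    then show ?thesis by (simp add: nth_append)
  next
    case False
    then have "concat (replicate (Suc k) w) ! t = w ! ((t - length w) mod length w)"
      using Suc by (simp add: nth_append)
    also have "(t - length w) mod length w = t mod length w" using False by (simp add: mod_if)
    finally show ?thesis .
  qed
qed

definition period_word :: "nat \<Rightarrow> (int \<Rightarrow> sym) \<Rightarrow> sym list" where
  "period_word n x = map (\<lambda>k. x (int k)) [0..<n]"

definition periodic_extension :: "nat \<Rightarrow> sym list \<Rightarrow> int \<Rightarrow> sym" where
  "periodic_extension n w = (\<lambda>i. w ! nat (i mod int n))"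

lemma window_eq_factor_of_power:
  assumes n: "0 < n" and per: "\<And>i. x (i + int n) = x i" and "i \<le> j"
  defines "L \<equiv> nat (j - i + 1)"
  shows "map x [i..j] =
    take L (drop (nat (i mod int n)) (concat (replicate (L + 1) (period_word n x))))"
proof (rule nth_equalityI)
  define d where "d = nat (i mod int n)"
  define W where "W = concat (replicate (L + 1) (period_word n x))"
  have d: "d < n" "int d = i mod int n" using n by (auto simp: d_def nat_less_iff)
  have lW: "length W = (L + 1) * n"
    by (simp add: W_def period_word_def length_concat sum_list_replicate)
  have "L \<le> L * n" "(L + 1) * n = L * n + n" using n by simp_all
  then have dL: "d + L \<le> (L + 1) * n" using d(1) by linarith
  then show "length (map x [i..j]) = length (take L (drop (nat (i mod int n)) W))"
    using lW by (simp add: L_def d_def)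
  fix t
  assume "t < length (map x [i..j])"
  then have t: "t < L" by (simp add: L_def)
  have "map x [i..j] ! t = x (i + int t)" using t by (simp add: L_def nth_upto)
  also have "\<dots> = x (int ((d + t) mod n))"
    using periodic_mod[of n x "i + int t", OF n per] d by (simp add: zmod_int mod_add_left_eq)
  also have "\<dots> = W ! (d + t)"
    using nth_concat_replicate[of "d + t" "L + 1" "period_word n x"] d t dL
    by (simp add: W_def period_word_def)
  also have "\<dots> = take L (drop (nat (i mod int n)) W) ! t"
    using t dL lW by (simp add: d_def)
  finally show "map x [i..j] ! t = take L (drop (nat (i mod int n)) W) ! t" .
qed

lemma length_period_word [simp]: "length (period_word n x) = n"
  by (simp add: period_word_def)

lemma period_word_periodic_extension: "length w = n \<Longrightarrow> period_word n (periodic_extension n w) = w"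
  by (rule nth_equalityI) (auto simp: period_word_def periodic_extension_def nat_mod_distrib)

lemma periodic_extension_period_word:
  assumes "0 < n" and "\<And>i. x (i + int n) = x i"
  shows "periodic_extension n (period_word n x) = x"
proof
  fix i
  have "nat (i mod int n) < n" using assms(1) by (simp add: nat_less_iff)
  then show "periodic_extension n (period_word n x) i = x i"
    using periodic_mod[of n x i, OF assms] assms(1)
    by (simp add: periodic_extension_def period_word_def)
qed

lemma cyclically_nonzero_period_word:
  assumes n: "0 < n" and per: "\<And>i. x (i + int n) = x i"
    and windows: "\<And>i j. i \<le> j \<Longrightarrow> nonzero (map x [i..j])"
  shows "cyclically_nonzero (period_word n x)"
  unfolding cyclically_nonzero_def
proof
  fix k
  show "nonzero (concat (replicate k (period_word n x)))"
  proof (cases "k = 0")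
    case True
    then show ?thesis by simp
  next
    case False
    let ?w = "period_word n x" and ?j = "int (k * n) - 1"
    have "0 \<le> ?j" using False n by simp
    have "k \<le> k * n + 1" using n by (simp add: le_SucI)
    then have "concat (replicate (k * n + 1) ?w) =
        concat (replicate k ?w) @ concat (replicate (k * n + 1 - k) ?w)"
      by (metis concat_append le_add_diff_inverse replicate_add)
    moreover have "nat (?j - 0 + 1) = k * n" by (simp del: of_nat_mult)
    ultimately have "map x [0..?j] = concat (replicate k ?w)"
      using window_eq_factor_of_power[of n x 0 ?j, OF n per \<open>0 \<le> ?j\<close>]
      by (simp add: length_concat sum_list_replicate)
    then show ?thesis using windows[OF \<open>0 \<le> ?j\<close>] by simp
  qed
qed

lemma periodic_extension_window_nonzero:
  assumes n: "0 < n" and "length w = n" and cyc: "cyclically_nonzero w" and "i \<le> j"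
  shows "nonzero (map (periodic_extension n w) [i..j])"
proof -
  let ?x = "periodic_extension n w"
  let ?W = "concat (replicate (nat (j - i + 1) + 1) w)"
  have per: "?x (i + int n) = ?x i" for i by (simp add: periodic_extension_def)
  have "map ?x [i..j] = take (nat (j - i + 1)) (drop (nat (i mod int n)) ?W)"
    using window_eq_factor_of_power[of n ?x i j, OF n per \<open>i \<le> j\<close>]
    by (simp add: period_word_periodic_extension[OF \<open>length w = n\<close>])
  moreover have "nonzero ?W" using cyc unfolding cyclically_nonzero_def by blast
  ultimately show ?thesis
    using nonzero_factor[of "take (nat (i mod int n)) ?W"] by (metis append_take_drop_id)
qed

lemma periodic_count_motzkin_shift:
  assumes n: "0 < n"
  shows "periodic_count (motzkin_shift M N) n = card (cyclic_words (alphabet M N) n)"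
proof -
  let ?A = "alphabet M N"
  let ?P = "{x \<in> motzkin_shift M N. (shift ^^ n) x = x}"
  have per_iff: "(shift ^^ n) x = x \<longleftrightarrow> (\<forall>i. x (i + int n) = x i)" for x
    by (auto simp: funpow_shift fun_eq_iff)
  have windows_iff: "(\<forall>i j. i \<le> j \<longrightarrow> \<not> red_is_zero (map x [i..j])) \<longleftrightarrow>
      (\<forall>i j. i \<le> j \<longrightarrow> nonzero (map x [i..j]))" for x
    by (simp add: red_is_zero_iff_not_nonzero)
  have "bij_betw (period_word n) ?P (cyclic_words ?A n)"
  proof (rule bij_betw_byWitness[of _ "periodic_extension n"])
    show "\<forall>x\<in>?P. periodic_extension n (period_word n x) = x"
      using periodic_extension_period_word[OF n] per_iff by blast
    show "\<forall>w\<in>cyclic_words ?A n. period_word n (periodic_extension n w) = w"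
      by (simp add: cyclic_words_def period_word_periodic_extension)
    show "period_word n ` ?P \<subseteq> cyclic_words ?A n"
      using cyclically_nonzero_period_word[OF n]
      by (fastforce simp: cyclic_words_def motzkin_shift_def per_iff windows_iff period_word_def)
    have "periodic_extension n w i \<in> set w" if "length w = n" for w i
      using that n by (simp add: periodic_extension_def nat_less_iff)
    then show "periodic_extension n ` cyclic_words ?A n \<subseteq> ?P"
      using periodic_extension_window_nonzero[OF n]
      by (fastforce simp: cyclic_words_def motzkin_shift_def per_iff windows_iff periodic_extension_def)
  qed
  then show ?thesis unfolding periodic_count_def by (rule bij_betw_same_card)
qed

lemma finite_alphabet: "finite (alphabet M N)"
proof -
  have "alphabet M N = Lam ` {1..M} \<union> Rho ` {1..M} \<union> One ` {1..N}"
    by (auto simp: alphabet_def)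
  then show ?thesis by simp
qed

lemma swap_letter_alphabet: "c \<in> alphabet M N \<Longrightarrow> swap_letter c \<in> alphabet M N"
  by (cases c) (auto simp: alphabet_def)

lemma alphabet_indices:
  "{i. One i \<in> alphabet M N} = {1..N}"
  "{i. Lam i \<in> alphabet M N} = {1..M}"
  "{i. Lam i \<in> alphabet M N \<and> Rho i \<in> alphabet M N} = {1..M}"
  by (auto simp: alphabet_def)

abbreviation balanced_count :: "nat \<Rightarrow> nat \<Rightarrow> nat \<Rightarrow> nat" where
  "balanced_count M N n \<equiv> card (balanced_words (alphabet M N) n)"

abbreviation rising_count :: "nat \<Rightarrow> nat \<Rightarrow> nat \<Rightarrow> nat" where
  "rising_count M N n \<equiv> card (rising_words (alphabet M N) n)"

lemma balanced_count_0: "balanced_count M N 0 = 1"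
proof -
  have "balanced_words (alphabet M N) 0 = {[]}" by (auto simp: balanced_words_def)
  then show ?thesis by simp
qed

lemma rising_count_0: "rising_count M N 0 = 1"
proof -
  have "rising_words (alphabet M N) 0 = {[]}" by (auto simp: rising_words_def)
  then show ?thesis by simp
qed

lemma balanced_count_Suc:
  "balanced_count M N (Suc n) =
     N * balanced_count M N n + M * (\<Sum>j<n. balanced_count M N j * balanced_count M N (n - 1 - j))"
  using sum_balanced_words_Suc[OF finite_alphabet, where g = "\<lambda>_. 1" and n = n]
  by (simp add: alphabet_indices sum_distrib_left)

lemma rising_count_Suc:
  "rising_count M N (Suc n) = M * (\<Sum>j\<le>n. balanced_count M N j * rising_count M N (n - j))"
  using sum_rising_words_Suc[OF finite_alphabet, where g = "\<lambda>_. 1" and n = n]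
  by (simp add: alphabet_indices sum_distrib_left)

lemma sum_balanced_cut_Suc:
  "(\<Sum>u\<in>balanced_words (alphabet M N) (Suc n). balanced_cut u) =
     N * balanced_count M N n +
     M * (\<Sum>j<n. (j + 2) * balanced_count M N j * balanced_count M N (n - 1 - j))"
proof -
  have "(\<Sum>a\<in>balanced_words (alphabet M N) j. \<Sum>b\<in>balanced_words (alphabet M N) (n - 1 - j).
          balanced_cut (Lam i # a @ Rho i # b))
      = (j + 2) * balanced_count M N j * balanced_count M N (n - 1 - j)" for i j
  proof -
    have "(\<Sum>a\<in>balanced_words (alphabet M N) j. \<Sum>b\<in>balanced_words (alphabet M N) (n - 1 - j).
          balanced_cut (Lam i # a @ Rho i # b)) =
        (\<Sum>a\<in>balanced_words (alphabet M N) j. \<Sum>b\<in>balanced_words (alphabet M N) (n - 1 - j). j + 2)"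
      by (intro sum.cong refl) (auto simp: balanced_words_def balanced_cut_Lam_Rho)
    then show ?thesis by (simp add: algebra_simps)
  qed
  moreover have "(\<Sum>v\<in>balanced_words (alphabet M N) n. balanced_cut (One i # v)) = balanced_count M N n" for i
  proof -
    have "(\<Sum>v\<in>balanced_words (alphabet M N) n. balanced_cut (One i # v)) =
        (\<Sum>v\<in>balanced_words (alphabet M N) n. 1)"
      by (intro sum.cong refl) (auto simp: balanced_words_def balanced_cut_One_Cons)
    then show ?thesis by simp
  qed
  ultimately show ?thesis
    by (simp add: sum_balanced_words_Suc[OF finite_alphabet] alphabet_indices sum_distrib_left)
qed

lemma sum_rising_cut_Suc:
  "(\<Sum>u\<in>rising_words (alphabet M N) (Suc n). rising_cut u) =
     M * (\<Sum>j\<le>n. (j + 1) * balanced_count M N j * rising_count M N (n - j))"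
proof -
  have "(\<Sum>b\<in>balanced_words (alphabet M N) j. \<Sum>s\<in>rising_words (alphabet M N) (n - j).
          rising_cut (Lam i # b @ s))
      = (j + 1) * balanced_count M N j * rising_count M N (n - j)" for i j
  proof -
    have "(\<Sum>b\<in>balanced_words (alphabet M N) j. \<Sum>s\<in>rising_words (alphabet M N) (n - j).
          rising_cut (Lam i # b @ s)) =
        (\<Sum>b\<in>balanced_words (alphabet M N) j. \<Sum>s\<in>rising_words (alphabet M N) (n - j). j + 1)"
      by (intro sum.cong refl) (auto simp: balanced_words_def rising_words_def rising_cut_Lam)
    then show ?thesis by (simp add: algebra_simps)
  qed
  then show ?thesis
    by (simp add: sum_rising_words_Suc[OF finite_alphabet] alphabet_indices sum_distrib_left)
qed

lemma periodic_count_Suc: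
  "periodic_count (motzkin_shift M N) (Suc n) =
     N * balanced_count M N n +
     M * (\<Sum>j<n. (j + 2) * balanced_count M N j * balanced_count M N (n - 1 - j)) +
     2 * M * (\<Sum>j\<le>n. (j + 1) * balanced_count M N j * rising_count M N (n - j))"
  using card_cyclic_words[OF finite_alphabet swap_letter_alphabet, where n = "Suc n"]
  by (simp add: periodic_count_motzkin_shift sum_balanced_cut_Suc sum_rising_cut_Suc)

section \<open>Generating functions\<close>

definition balanced_gf :: "nat \<Rightarrow> nat \<Rightarrow> real fps" where
  "balanced_gf M N = Abs_fps (\<lambda>n. real (balanced_count M N n))"

definition rising_gf :: "nat \<Rightarrow> nat \<Rightarrow> real fps" where
  "rising_gf M N = Abs_fps (\<lambda>n. real (rising_count M N n))"

definition periodic_log_fps :: "(int \<Rightarrow> sym) set \<Rightarrow> real fps" where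
  "periodic_log_fps X = Abs_fps (\<lambda>n. if n = 0 then 0 else real (periodic_count X n) / real n)"

lemma sum_lessThan_Suc_eq_atMost: "(\<Sum>j<Suc k. f j) = (\<Sum>j\<le>k. f j)"
  by (simp add: lessThan_Suc_atMost)

lemma balanced_gf_eq:
  "balanced_gf M N =
     1 + fps_X * (fps_const (real N) * balanced_gf M N + fps_const (real M) * (fps_X * balanced_gf M N ^ 2))"
  (is "?B = _")
proof (rule fps_ext)
  fix n
  show "?B $ n = (1 + fps_X * (fps_const (real N) * ?B + fps_const (real M) * (fps_X * ?B ^ 2))) $ n"
  proof (cases n)
    case 0
    then show ?thesis by (simp add: balanced_gf_def balanced_count_0)
  next
    case (Suc m)
    have "(\<Sum>j<m. real (balanced_count M N j) * real (balanced_count M N (m - 1 - j))) = (fps_X * ?B ^ 2) $ m"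
    proof (cases m)
      case (Suc k)
      have "(fps_X * ?B ^ 2) $ m = (?B * ?B) $ k" using Suc by (simp add: power2_eq_square)
      also have "\<dots> = (\<Sum>j\<le>k. real (balanced_count M N j) * real (balanced_count M N (k - j)))"
        by (simp add: fps_mult_nth balanced_gf_def atLeast0AtMost)
      finally show ?thesis using Suc by (simp add: sum_lessThan_Suc_eq_atMost del: sum.lessThan_Suc)
    qed simp
    then have "real (balanced_count M N (Suc m)) = real N * real (balanced_count M N m) + real M * (fps_X * ?B ^ 2) $ m"
      by (simp only: balanced_count_Suc of_nat_add of_nat_mult of_nat_sum)
    then show ?thesis using Suc by (simp add: balanced_gf_def)
  qed
qed

lemma rising_gf_eq: "rising_gf M N = 1 + fps_X * (fps_const (real M) * (balanced_gf M N * rising_gf M N))"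
proof (rule fps_ext)
  fix n
  show "rising_gf M N $ n = (1 + fps_X * (fps_const (real M) * (balanced_gf M N * rising_gf M N))) $ n"
  proof (cases n)
    case 0
    then show ?thesis by (simp add: rising_gf_def rising_count_0)
  next
    case (Suc m)
    have "real (rising_count M N (Suc m)) = real M * (\<Sum>j\<le>m. real (balanced_count M N j) * real (rising_count M N (m - j)))"
      by (simp only: rising_count_Suc of_nat_add of_nat_mult of_nat_sum)
    also have "(\<Sum>j\<le>m. real (balanced_count M N j) * real (rising_count M N (m - j))) = (balanced_gf M N * rising_gf M N) $ m"
      by (simp add: fps_mult_nth balanced_gf_def rising_gf_def atLeast0AtMost)
    finally show ?thesis using Suc by (simp add: rising_gf_def)
  qed
qed

lemma fps_deriv_periodic_log_fps:
  fixes M N :: nat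
  defines "B \<equiv> balanced_gf M N" and "T \<equiv> rising_gf M N"
  shows "fps_deriv (periodic_log_fps (motzkin_shift M N)) =
    fps_const (real N) * B + fps_const (real M) * (fps_X * ((2 * B + fps_X * fps_deriv B) * B))
    + fps_const (2 * real M) * ((B + fps_X * fps_deriv B) * T)"
proof -
  define D where "D = Abs_fps (\<lambda>j. real (j + 2) * real (balanced_count M N j))"
  define E where "E = Abs_fps (\<lambda>j. real (j + 1) * real (balanced_count M N j))"
  have D: "D = 2 * B + fps_X * fps_deriv B"
    by (rule fps_ext) (auto simp: D_def B_def balanced_gf_def numeral_fps_const algebra_simps)
  have E: "E = B + fps_X * fps_deriv B"
    by (rule fps_ext) (auto simp: E_def B_def balanced_gf_def algebra_simps)
  have "fps_deriv (periodic_log_fps (motzkin_shift M N)) =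
      fps_const (real N) * B + fps_const (real M) * (fps_X * (D * B)) + fps_const (2 * real M) * (E * T)"
  proof (rule fps_ext)
    fix k
    have "fps_deriv (periodic_log_fps (motzkin_shift M N)) $ k =
        real (periodic_count (motzkin_shift M N) (Suc k))"
      by (simp add: periodic_log_fps_def del: of_nat_Suc)
    also have "\<dots> = real N * real (balanced_count M N k) +
        real M * (\<Sum>j<k. real (j + 2) * real (balanced_count M N j) * real (balanced_count M N (k - 1 - j))) +
        2 * real M * (\<Sum>j\<le>k. real (j + 1) * real (balanced_count M N j) * real (rising_count M N (k - j)))"
      by (simp only: periodic_count_Suc of_nat_add of_nat_mult of_nat_sum of_nat_numeral)
    also have "(\<Sum>j<k. real (j + 2) * real (balanced_count M N j) * real (balanced_count M N (k - 1 - j))) =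
        (fps_X * (D * B)) $ k"
    proof (cases k)
      case (Suc k')
      have "(fps_X * (D * B)) $ k = (D * B) $ k'" using Suc by simp
      also have "\<dots> = (\<Sum>j\<le>k'. real (j + 2) * real (balanced_count M N j) * real (balanced_count M N (k' - j)))"
        by (simp add: fps_mult_nth D_def B_def balanced_gf_def atLeast0AtMost)
      finally show ?thesis using Suc by (simp add: sum_lessThan_Suc_eq_atMost del: sum.lessThan_Suc)
    qed simp
    also have "(\<Sum>j\<le>k. real (j + 1) * real (balanced_count M N j) * real (rising_count M N (k - j))) =
        (E * T) $ k"
      by (simp add: fps_mult_nth E_def T_def rising_gf_def atLeast0AtMost)
    finally show "fps_deriv (periodic_log_fps (motzkin_shift M N)) $ k =
        (fps_const (real N) * B + fps_const (real M) * (fps_X * (D * B)) + fps_const (2 * real M) * (E * T)) $ k"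
      by (simp add: B_def balanced_gf_def)
  qed
  then show ?thesis by (simp only: D E)
qed

lemma fps_deriv_eq_mult_unique:
  fixes F H D :: "'a::field_char_0 fps"
  assumes "fps_deriv F = F * D" and "fps_deriv H = H * D" and "F $ 0 = H $ 0"
  shows "F = H"
proof -
  have "\<forall>m\<le>n. F $ m = H $ m" for n
  proof (induction n)
    case 0
    then show ?case using assms(3) by simp
  next
    case (Suc n)
    have "of_nat (Suc n) * F $ Suc n = (F * D) $ n" "of_nat (Suc n) * H $ Suc n = (H * D) $ n"
      using arg_cong[OF assms(1), of "\<lambda>f. f $ n"] arg_cong[OF assms(2), of "\<lambda>f. f $ n"]
      by (simp_all add: mult.commute)
    moreover have "(F * D) $ n = (H * D) $ n" using Suc by (simp add: fps_mult_nth)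
    ultimately have "F $ Suc n = H $ Suc n"
      by (metis mult_cancel_left of_nat_eq_0_iff nat.distinct(1))
    then show ?case using Suc le_Suc_eq by auto
  qed
  then show ?thesis by (intro fps_ext) blast
qed

lemma fps_deriv_reciprocal:
  fixes b q :: "'a::comm_ring_1 fps"
  assumes "b * q = 1"
  shows "fps_deriv b = - (b ^ 2 * fps_deriv q)"
proof -
  have "fps_deriv b * q + b * fps_deriv q = 0"
    using arg_cong[OF assms, of fps_deriv] by (simp add: fps_deriv_mult add.commute)
  then have "fps_deriv b * q = - (b * fps_deriv q)"
    by (simp add: eq_neg_iff_add_eq_0)
  then have "b * (fps_deriv b * q) = - (b ^ 2 * fps_deriv q)"
    by (simp add: power2_eq_square)
  moreover have "fps_deriv b = (b * q) * fps_deriv b"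
    using assms by simp
  then have "fps_deriv b = b * (fps_deriv b * q)"
    by (simp only: ac_simps)
  ultimately show ?thesis by simp
qed

lemma balanced_gf_reciprocal:
  "balanced_gf M N * (1 - of_nat N * fps_X - of_nat M * fps_X ^ 2 * balanced_gf M N) = 1"
  using balanced_gf_eq[of M N] unfolding fps_of_nat by (simp add: algebra_simps power2_eq_square)

lemma rising_gf_reciprocal: "rising_gf M N * (1 - of_nat M * fps_X * balanced_gf M N) = 1"
  using rising_gf_eq[of M N] unfolding fps_of_nat by (simp add: algebra_simps)

lemma zeta_fps_motzkin_shift_eq:
  fixes M N :: nat
  defines "B \<equiv> balanced_gf M N" and "T \<equiv> rising_gf M N"
  shows "zeta_fps (motzkin_shift M N) = B * T ^ 2"
proof -
  let ?X = "fps_X :: real fps" and ?L = "periodic_log_fps (motzkin_shift M N)"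
  let ?n = "of_nat N :: real fps" and ?m = "of_nat M :: real fps"
  define P where "P = ?n + ?m * ?X * (2 * B + ?X * fps_deriv B)"
  define Q where "Q = ?m * (B + ?X * fps_deriv B)"
  have "fps_deriv B = - (B ^ 2 * fps_deriv (1 - ?n * ?X - ?m * ?X ^ 2 * B))"
    using balanced_gf_reciprocal[of M N, folded B_def] by (rule fps_deriv_reciprocal)
  also have "fps_deriv (1 - ?n * ?X - ?m * ?X ^ 2 * B) = - P"
    by (simp add: P_def algebra_simps power2_eq_square)
  finally have B': "fps_deriv B = B ^ 2 * P" by simp
  have "fps_deriv T = - (T ^ 2 * fps_deriv (1 - ?m * ?X * B))"
    using rising_gf_reciprocal[of M N, folded B_def T_def] by (rule fps_deriv_reciprocal)
  also have "fps_deriv (1 - ?m * ?X * B) = - Q"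
    by (simp add: Q_def algebra_simps)
  finally have T': "fps_deriv T = T ^ 2 * Q" by simp
  have "fps_deriv (B * T ^ 2) = fps_deriv B * T ^ 2 + B * (2 * T * fps_deriv T)"
    by (simp add: power2_eq_square algebra_simps)
  also have "\<dots> = (B * T ^ 2) * (B * P + 2 * T * Q)"
    unfolding B' T' by (simp add: power2_eq_square algebra_simps)
  also have "B * P + 2 * T * Q = fps_deriv ?L"
    unfolding fps_deriv_periodic_log_fps[of M N, folded B_def T_def] P_def Q_def
    by (simp add: algebra_simps fps_of_nat numeral_fps_const flip: fps_const_mult)
  finally have ode_BT: "fps_deriv (B * T ^ 2) = (B * T ^ 2) * fps_deriv ?L" .
  have ode_exp: "fps_deriv (fps_exp 1 oo ?L) = (fps_exp 1 oo ?L) * fps_deriv ?L"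
    by (simp add: fps_compose_deriv periodic_log_fps_def)
  have "(fps_exp 1 oo ?L) $ 0 = (B * T ^ 2) $ 0"
    by (simp add: B_def T_def balanced_gf_def rising_gf_def balanced_count_0 rising_count_0
        periodic_log_fps_def power2_eq_square)
  with ode_exp ode_BT show ?thesis
    unfolding zeta_fps_def periodic_log_fps_def[symmetric] by (rule fps_deriv_eq_mult_unique)
qed

lemma fps_sqrt1_unique:
  assumes "a ^ 2 = b" and "a $ 0 = 1"
  shows "fps_sqrt1 b = a"
proof -
  have "b $ 0 = 1" using assms by (auto simp: power2_eq_square)
  then have "a ^ Suc 1 = b \<longleftrightarrow> a = fps_radical (\<lambda>_ x. sqrt x) (Suc 1) b"
    using assms(2) by (intro radical_unique) simp_all
  then show ?thesis using assms(1) by (simp add: fps_sqrt1_def numeral_2_eq_2)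
qed

lemma fps_sqrt1_motzkin_discriminant:
  "fps_sqrt1 ((1 - of_nat N * fps_X) ^ 2 - 4 * of_nat M * fps_X ^ 2) =
     1 - of_nat N * fps_X - 2 * of_nat M * fps_X ^ 2 * balanced_gf M N"
proof (rule fps_sqrt1_unique)
  show "(1 - of_nat N * fps_X - 2 * of_nat M * fps_X ^ 2 * balanced_gf M N) ^ 2 =
      (1 - of_nat N * fps_X) ^ 2 - 4 * of_nat M * fps_X ^ 2"
    using balanced_gf_reciprocal[of M N] by algebra
qed (simp add: power2_eq_square)

lemma balanced_rising_gf_closed_form:
  fixes M N :: nat
  defines "z \<equiv> (fps_X :: real fps)"
  defines "S \<equiv> fps_sqrt1 ((1 - of_nat N * z) ^ 2 - 4 * of_nat M * z ^ 2)"
  shows "balanced_gf M N * rising_gf M N ^ 2 =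
    2 * (1 - of_nat N * z + S) / (1 - (2 * of_nat M + of_nat N) * z + S) ^ 2"
proof -
  let ?B = "balanced_gf M N" and ?T = "rising_gf M N"
  let ?n = "of_nat N :: real fps" and ?m = "of_nat M :: real fps"
  define Den where "Den = 1 - (2 * ?m + ?n) * z + S"
  note B = balanced_gf_reciprocal[of M N, folded z_def]
  note T = rising_gf_reciprocal[of M N, folded z_def]
  have S: "S = 1 - ?n * z - 2 * ?m * z ^ 2 * ?B"
    unfolding S_def z_def by (rule fps_sqrt1_motzkin_discriminant)
  have num: "?B * (1 - ?n * z + S) = 2" using B unfolding S by algebra
  have den: "?B * ?T * Den = 2" using B T unfolding Den_def S by algebra
  have "?B * (?B * ?T ^ 2 * Den ^ 2) = (?B * ?T * Den) ^ 2"
    by (simp add: power2_eq_square ac_simps)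
  also have "\<dots> = 2 * 2" using den by simp
  also have "\<dots> = ?B * (2 * (1 - ?n * z + S))"
    using num by (simp only: mult.left_commute[of ?B 2])
  finally have "?B * (?B * ?T ^ 2 * Den ^ 2) = ?B * (2 * (1 - ?n * z + S))" .
  moreover have "?B \<noteq> 0" using B by auto
  ultimately have "?B * ?T ^ 2 * Den ^ 2 = 2 * (1 - ?n * z + S)" by (metis mult_left_cancel)
  moreover have "Den ^ 2 \<noteq> 0" using den by auto
  ultimately show ?thesis
    unfolding Den_def by (metis nonzero_mult_div_cancel_right)
qed

theorem proposition2p2:
  fixes M N :: nat
  defines "z \<equiv> (fps_X :: real fps)"
  defines "S \<equiv> fps_sqrt1 ((1 - of_nat N * z)^2 - 4 * of_nat M * z^2)"
  shows "zeta_fps (motzkin_shift M N) =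
    2 * (1 - of_nat N * z + S) / (1 - (2 * of_nat M + of_nat N) * z + S)^2"
  unfolding zeta_fps_motzkin_shift_eq z_def S_def by (rule balanced_rising_gf_closed_form)

end
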